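(* In the setting below, for each $N\in\mathbb N$ let $u_N:\Omega\to U$ be measurable with values in $\mathcal D(\psi)$. Then for all $N\in\mathbb N$ and $\nu>0$, $$\mathbb E[\Psi(u_N)]\le \mathbb E[\hat\Psi_N(u_N)]+2\,\mathbb E[L_{\mathrm Df}(\boldsymbol\xi)]\,r_{\mathrm{ad}}\,\nu+\frac{\sqrt3\,\tau_{\mathrm Df}\,r_{\mathrm{ad}}}{\sqrt N}\big(\mathcal N(\nu;B(\mathcal D(\psi)))\big)^{1/2}.$$
   Context: Let $U$ be a separable Hilbert space (identified with its dual, inner product $(\cdot,\cdot)_U$), $W$ a separable Banach space with dual $W^*$, and $B:U\to W$ a compact linear operator with adjoint $B^*$. Let $\psi:U\to[0,\infty]$ be proper, closed and convex with bounded domain $\mathcal D(\psi)=\{u:\psi(u)<\infty\}$, whose diameter is $r_{\mathrm{ad}}$. Let $U_0\subset U$ be open, convex and bounded with $\mathcal D(\psi)\subset U_0$. Let $\Xi$ be a complete separable metric space, $\boldsymbol\xi$ a $\Xi$-valued random element, and $\boldsymbol\xi^1,\boldsymbol\xi^2,\ldots$ i.i.d. copies of $\boldsymbol\xi$ on a complete probability space $(\Omega,\mathcal F,P)$. Let $f:B(U_0)\times\Xi\to\mathbb R$ be such that $f(\cdot,\xi)$ is continuous on $B(\mathcal D(\psi))$, $f(w,\cdot)$ is measurable, and $|f(Bu,\xi)|\le \zeta_f(\xi)$ on $U_0\times\Xi$ with $\zeta_f$ integrable. Assume: for each $\xi$, $g_\xi(u)=f(Bu,\xi)$ is continuously differentiable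 on $U_0$; there is a Carathéodory map $\mathrm D_wf:B(\mathcal D(\psi))\times\Xi\to W^*$ with $\nabla g_\xi(u)=B^*\mathrm D_wf(Bu,\xi)$ on $\mathcal D(\psi)\times\Xi$; there is an integrable $\zeta_{\mathrm Df}$ with $\|\nabla g_\xi(u)\|_U\le\zeta_{\mathrm Df}(\xi)$ on $U_0\times\Xi$ and $\|\mathrm D_wf(Bu,\xi)\|_{W^*}\le\zeta_{\mathrm Df}(\xi)$ on $\mathcal D(\psi)\times\Xi$. Moreover: there is an integrable $L_{\mathrm Df}:\Xi\to[0,\infty)$ with $\|\nabla g_\xi(u_2)-\nabla g_\xi(u_1)\|_U\le L_{\mathrm Df}(\xi)\|Bu_2-Bu_1\|_W$ for all $u_1,u_2\in\mathcal D(\psi)$, $\xi\in\Xi$; and there is $\tau_{\mathrm Df}>0$ with $\mathbb E[\exp(\tau_{\mathrm Df}^{-2}\|\nabla g_{\boldsymbol\xi}(u)-\mathbb E[\nabla g_{\boldsymbol\xi}(u)]\|_U^2)]\le e$ for all $u\in\mathcal D(\psi)$. Define $\mathrm DF(w)=\mathbb E[\mathrm D_wf(w,\boldsymbol\xi)]$, $\mathrm D\hat F_N(w)=\frac1N\sum_{i=1}^N\mathrm D_wf(w,\boldsymbol\xi^i)$, and on $\mathcal D(\psi)$ the gap functionals $\Psi(u)=\sup_{v\in\mathcal D(\psi)}[(B^*\mathrm DF(Bu),u-v)_U+\psi(u)-\psi(v)]$ and $\hat\Psi_N(u)=\sup_{v\in\mathcal D(\psi)}[(B^*\mathrm D\hat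 F_N(Bu),u-v)_U+\psi(u)-\psi(v)]$. For $\nu>0$, $\mathcal N(\nu;B(\mathcal D(\psi)))$ is the minimal number of points in a $\nu$-net (in $\|\cdot\|_W$) of the totally bounded set $B(\mathcal D(\psi))$. *)

theory Defs
  imports "HOL-Probability.Probability"
begin

definition dom_psi :: "('u \<Rightarrow> ennreal) \<Rightarrow> 'u set" where
  "dom_psi \<psi> = {u. \<psi> u < \<infinity>}"

definition ennconvex :: "('u::real_vector \<Rightarrow> ennreal) \<Rightarrow> bool" where
  "ennconvex \<psi> \<longleftrightarrow> (\<forall>x y t. 0 \<le> t \<and> t \<le> 1 \<longrightarrow>
      \<psi> (t *\<^sub>R x + (1 - t) *\<^sub>R y) \<le> ennreal t * \<psi> x + ennreal (1 - t) * \<psi> y)"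

definition ennclosed :: "('u::topological_space \<Rightarrow> ennreal) \<Rightarrow> bool" where
  "ennclosed \<psi> \<longleftrightarrow> (\<forall>c. closed {u. \<psi> u \<le> c})"

definition ennproper :: "('u \<Rightarrow> ennreal) \<Rightarrow> bool" where
  "ennproper \<psi> \<longleftrightarrow> (\<exists>u. \<psi> u < \<infinity>)"

text \<open>Gap functional. G w is the (derivative) functional at w, given by its action
  G w h on h in W; thus (B^* G(Bu), u - v)_U = G (B u) (B (u - v)).\<close>
definition gap_fun :: "('u::real_vector \<Rightarrow> ennreal) \<Rightarrow> ('u \<Rightarrow> 'w) \<Rightarrow> ('w \<Rightarrow> 'w \<Rightarrow> real)
    \<Rightarrow> 'u \<Rightarrow> real" where
  "gap_fun \<psi> B G u = (SUP v\<in>dom_psi \<psi>.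
      G (B u) (B (u - v)) + enn2real (\<psi> u) - enn2real (\<psi> v))"

definition covering_number :: "real \<Rightarrow> 'a::metric_space set \<Rightarrow> nat" where
  "covering_number \<nu> S =
     (LEAST n. \<exists>F. finite F \<and> F \<subseteq> S \<and> card F = n \<and> S \<subseteq> (\<Union>x\<in>F. cball x \<nu>))"

end

theory Submission
  imports Defs
begin

text \<open>Write D for the domain of \<psi>. Both gap functionals are suprema over D of functions that are
  affine in the gradient, so pointwise the gap of the true gradient exceeds that of the sampled
  gradient by at most diameter D times the distance between the two gradients. To bound this
  distance uniformly, take a \<nu>-net B k_1, ..., B k_K of B ` D with K the covering number. Since
  gradients are Lipschitz in B u, the gradient error at u exceeds the error at a nearest net point by
  at most \<nu> (E L + L_N), with L_N the sample mean of L, and the errors at the net points are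
  dominated by the square root of the sum of their squares. Each squared error has expectation at
  most e \<tau>^2 / N \<le> 3 \<tau>^2 / N: the sample mean averages N independent centred terms
  (Bienayme's identity), whose second moments the sub-Gaussian hypothesis bounds by e \<tau>^2. Jensen's
  inequality for the square root then yields the last term of the estimate.\<close>

section \<open>Measure-theoretic preliminaries\<close>

lemma borel_measurable_lipschitz_factor:
  fixes l :: "'a \<Rightarrow> 'b::metric_space" and g :: "'a \<Rightarrow> 'c::metric_space"
  assumes l: "l \<in> borel_measurable M" and "C \<ge> 0"
    and lip: "\<And>a b. dist (g a) (g b) \<le> C * dist (l a) (l b)"
  shows "g \<in> borel_measurable M"
proof -
  define T where "T y = g (SOME a. l a = y)" for y
  have T_l: "T (l a) = g a" for a
  proof -
    have "l (SOME a'. l a' = l a) = l a" by (rule someI) (rule refl)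
    then show ?thesis using lip[of "SOME a'. l a' = l a" a] by (simp add: T_def)
  qed
  have "lipschitz_on C (range l) T"
    by (rule lipschitz_onI) (auto simp: T_l lip \<open>C \<ge> 0\<close>)
  then have "T \<in> borel_measurable (restrict_space borel (range l))"
    by (intro borel_measurable_continuous_on_restrict lipschitz_on_continuous_on)
  moreover have "l \<in> measurable M (restrict_space borel (range l))"
    using l by (intro measurable_restrict_space2) auto
  ultimately have "(\<lambda>a. T (l a)) \<in> borel_measurable M"
    by (rule measurable_compose[rotated])
  then show ?thesis by (simp add: T_l)
qed

lemma borel_measurable_adjoint_representer:
  fixes B :: "'u::real_inner \<Rightarrow> 'w::real_normed_vector"
    and g :: "'a \<Rightarrow> 'u" and l :: "'a \<Rightarrow> ('w \<Rightarrow>\<^sub>L real)"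
  assumes B: "bounded_linear B" and adj: "\<And>a h. g a \<bullet> h = l a (B h)"
    and l: "l \<in> borel_measurable M"
  shows "g \<in> borel_measurable M"
proof -
  obtain K where K: "K > 0" "\<And>x. norm (B x) \<le> norm x * K"
    using bounded_linear.pos_bounded[OF B] by blast
  have lip: "dist (g a) (g b) \<le> K * dist (l a) (l b)" for a b
  proof -
    let ?d = "g a - g b"
    have "(norm ?d)\<^sup>2 = g a \<bullet> ?d - g b \<bullet> ?d"
      by (simp add: power2_norm_eq_inner inner_diff_left)
    also have "\<dots> = (l a - l b) (B ?d)"
      by (simp add: adj blinfun.diff_left)
    also have "\<dots> \<le> norm (l a - l b) * norm (B ?d)"
      by (metis abs_le_D1 norm_blinfun real_norm_def)
    also have "\<dots> \<le> norm (l a - l b) * (norm ?d * K)"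
      using K(2) by (intro mult_left_mono) auto
    finally have "norm ?d * norm ?d \<le> (K * norm (l a - l b)) * norm ?d"
      by (simp add: power2_eq_square algebra_simps)
    then have "norm ?d \<le> K * norm (l a - l b)"
      using K(1) by (cases "norm ?d = 0") (auto simp: mult_le_cancel_right)
    then show ?thesis by (simp add: dist_norm)
  qed
  show ?thesis
    using K(1) by (intro borel_measurable_lipschitz_factor[OF l _ lip]) simp
qed

text \<open>Only h needs to be measurable: the lemma is applied with gap functionals as f and g, whose
  measurability is not known.\<close>

lemma nn_integral_le_add:
  assumes h: "h \<in> borel_measurable M"
    and le: "\<And>x. x \<in> space M \<Longrightarrow> f x \<le> g x + h x"
  shows "integral\<^sup>N M f \<le> integral\<^sup>N M g + integral\<^sup>N M h"
  unfolding nn_integral_def_finite[of M f]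
proof (rule SUP_least)
  fix s assume "s \<in> {s. simple_function M s \<and> s \<le> f \<and> (\<forall>x. s x < top)}"
  then have s: "simple_function M s" "s \<le> f" "\<And>x. s x < top" by auto
  define s' where "s' x = s x - h x" for x
  have s'_measurable: "s' \<in> borel_measurable M"
    unfolding s'_def using borel_measurable_simple_function[OF s(1)] h by measurable
  have "integral\<^sup>S M s = integral\<^sup>N M s" using s(1) by (simp add: nn_integral_eq_simple_integral)
  also have "\<dots> \<le> integral\<^sup>N M (\<lambda>x. s' x + h x)"
    by (intro nn_integral_mono) (simp add: s'_def diff_add_self_ennreal not_le less_imp_le)
  also have "\<dots> = integral\<^sup>N M s' + integral\<^sup>N M h"
    by (rule nn_integral_add[OF s'_measurable h])
  also have "integral\<^sup>N M s' \<le> integral\<^sup>N M g"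
  proof (rule nn_integral_mono)
    fix x assume "x \<in> space M"
    then have "s x \<le> g x + h x" using s(2) le by (metis le_fun_def order_trans)
    then show "s' x \<le> g x" unfolding s'_def using s(3)[of x] by (auto simp: ennreal_minus_le_iff add.commute)
  qed
  finally show "integral\<^sup>S M s \<le> integral\<^sup>N M g + integral\<^sup>N M h" by (simp add: add_right_mono order_trans)
qed

lemma
  fixes h :: "'x \<Rightarrow> 'b::{banach, second_countable_topology}"
  assumes "X \<in> measurable M N" "Y \<in> measurable M N" "distr M N X = distr M N Y"
    and "h \<in> borel_measurable N"
  shows integrable_comp_distr_eq: "integrable M (\<lambda>\<omega>. h (X \<omega>)) \<longleftrightarrow> integrable M (\<lambda>\<omega>. h (Y \<omega>))"
    and integral_comp_distr_eq: "(\<integral>\<omega>. h (X \<omega>) \<partial>M) = (\<integral>\<omega>. h (Y \<omega>) \<partial>M)"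
  using assms integrable_distr_eq[of _ M N h] integral_distr[of _ M N h] by metis+

lemma second_moment_le_of_exp_square:
  fixes X :: "'a \<Rightarrow> 'b::real_normed_vector"
  assumes [measurable]: "X \<in> borel_measurable M" and "\<tau> > 0" and "c \<ge> 0"
    and exp_moment: "(\<integral>\<^sup>+\<omega>. ennreal (exp ((norm (X \<omega>))\<^sup>2 / \<tau>\<^sup>2)) \<partial>M) \<le> ennreal c"
  shows "integrable M (\<lambda>\<omega>. (norm (X \<omega>))\<^sup>2)" "(\<integral>\<omega>. (norm (X \<omega>))\<^sup>2 \<partial>M) \<le> \<tau>\<^sup>2 * c"
proof -
  have "(norm (X \<omega>))\<^sup>2 \<le> \<tau>\<^sup>2 * exp ((norm (X \<omega>))\<^sup>2 / \<tau>\<^sup>2)" for \<omega>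
    using exp_ge_add_one_self[of "(norm (X \<omega>))\<^sup>2 / \<tau>\<^sup>2"] \<open>\<tau> > 0\<close>
    by (simp add: field_simps) (smt (verit) zero_le_power2[of \<tau>])
  then have "(\<integral>\<^sup>+\<omega>. ennreal ((norm (X \<omega>))\<^sup>2) \<partial>M)
      \<le> (\<integral>\<^sup>+\<omega>. ennreal (\<tau>\<^sup>2) * ennreal (exp ((norm (X \<omega>))\<^sup>2 / \<tau>\<^sup>2)) \<partial>M)"
    by (intro nn_integral_mono) (simp add: ennreal_leI flip: ennreal_mult)
  also have "\<dots> = ennreal (\<tau>\<^sup>2) * (\<integral>\<^sup>+\<omega>. ennreal (exp ((norm (X \<omega>))\<^sup>2 / \<tau>\<^sup>2)) \<partial>M)"
    by (rule nn_integral_cmult) measurable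
  also have "\<dots> \<le> ennreal (\<tau>\<^sup>2 * c)"
    using exp_moment by (metis ennreal_mult' mult_left_mono zero_le_power2 zero_le)
  finally have bound: "(\<integral>\<^sup>+\<omega>. ennreal ((norm (X \<omega>))\<^sup>2) \<partial>M) \<le> ennreal (\<tau>\<^sup>2 * c)" .
  show integrable: "integrable M (\<lambda>\<omega>. (norm (X \<omega>))\<^sup>2)"
    using bound by (intro integrableI_bounded) (auto simp: le_less_trans)
  show "(\<integral>\<omega>. (norm (X \<omega>))\<^sup>2 \<partial>M) \<le> \<tau>\<^sup>2 * c"
    using bound nn_integral_eq_integral[OF integrable] \<open>c \<ge> 0\<close> by simp
qed

lemma (in prob_space) integral_sqrt_le_sqrt_integral:
  fixes S :: "'a \<Rightarrow> real"
  assumes "integrable M S" "\<And>\<omega>. S \<omega> \<ge> 0"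
  shows "integrable M (\<lambda>\<omega>. sqrt (S \<omega>))" "expectation (\<lambda>\<omega>. sqrt (S \<omega>)) \<le> sqrt (expectation S)"
proof -
  have [measurable]: "S \<in> borel_measurable M" using assms(1) by (rule borel_measurable_integrable)
  have sq: "integrable M (\<lambda>\<omega>. (sqrt (S \<omega>))\<^sup>2)" using assms by simp
  show integrable: "integrable M (\<lambda>\<omega>. sqrt (S \<omega>))"
    by (rule square_integrable_imp_integrable[OF _ sq]) measurable
  have "(expectation (\<lambda>\<omega>. sqrt (S \<omega>)))\<^sup>2 \<le> expectation S"
    using variance_positive[of "\<lambda>\<omega>. sqrt (S \<omega>)"] variance_eq[OF integrable sq] assms(2) by simp
  then show "expectation (\<lambda>\<omega>. sqrt (S \<omega>)) \<le> sqrt (expectation S)"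
    by (rule real_le_rsqrt)
qed

section \<open>Sums of independent random vectors\<close>

lemma (in prob_space) indep_vars_imp_indep_var:
  assumes "indep_vars (\<lambda>_. N) X I" "i \<in> I" "j \<in> I" "i \<noteq> j"
  shows "indep_var N (X i) N (X j)"
proof -
  have "indep_var N ((\<lambda>f. f i) \<circ> (\<lambda>\<omega>. restrict (\<lambda>i. X i \<omega>) {i}))
      N ((\<lambda>f. f j) \<circ> (\<lambda>\<omega>. restrict (\<lambda>i. X i \<omega>) {j}))"
    using assms by (intro indep_var_compose[OF indep_var_restrict[OF assms(1)]]) auto
  then show ?thesis by (simp add: comp_def)
qed

lemma integral_inner_pair_measure:
  fixes P Q :: "'u::{real_inner, banach, second_countable_topology} measure"
  assumes "pair_sigma_finite P Q" "sets P = sets borel" "sets Q = sets borel"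
    and P_int: "integrable P (\<lambda>x. x)" and Q_int: "integrable Q (\<lambda>y. y)"
  shows "integrable (P \<Otimes>\<^sub>M Q) (\<lambda>p. fst p \<bullet> snd p)"
    and "(\<integral>p. fst p \<bullet> snd p \<partial>(P \<Otimes>\<^sub>M Q)) = (\<integral>x. x \<partial>P) \<bullet> (\<integral>y. y \<partial>Q)"
proof -
  interpret pair_sigma_finite P Q by fact
  define f where "f = (\<lambda>p::'u \<times> 'u. fst p \<bullet> snd p)"
  have sets_PQ: "sets (P \<Otimes>\<^sub>M Q) = sets (borel \<Otimes>\<^sub>M borel)"
    using assms(2,3) by (rule sets_pair_measure_cong)
  have f_measurable: "f \<in> borel_measurable (P \<Otimes>\<^sub>M Q)"
    unfolding measurable_cong_sets[OF sets_PQ refl] f_def by measurable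
  have "integrable (P \<Otimes>\<^sub>M Q) f"
  proof (rule Fubini_integrable[OF f_measurable])
    have "integrable P (\<lambda>x. norm x * (\<integral>y. norm y \<partial>Q))"
      using P_int by (intro integrable_mult_left integrable_norm)
    moreover have "(\<lambda>x. \<integral>y. norm (f (x, y)) \<partial>Q) \<in> borel_measurable P"
      using f_measurable by (intro M2.borel_measurable_lebesgue_integral) simp
    moreover have "AE x in P. norm (\<integral>y. norm (f (x, y)) \<partial>Q) \<le> norm (norm x * (\<integral>y. norm y \<partial>Q))"
    proof (rule AE_I2)
      fix x
      have "(\<integral>y. norm (f (x, y)) \<partial>Q) \<le> (\<integral>y. norm x * norm y \<partial>Q)"
        using Q_int by (intro integral_mono) (auto simp: f_def Cauchy_Schwarz_ineq2)
      then show "norm (\<integral>y. norm (f (x, y)) \<partial>Q) \<le> norm (norm x * (\<integral>y. norm y \<partial>Q))"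
        by (simp add: integral_nonneg_AE)
    qed
    ultimately show "integrable P (\<lambda>x. \<integral>y. norm (f (x, y)) \<partial>Q)"
      by (rule Bochner_Integration.integrable_bound)
    show "AE x in P. integrable Q (\<lambda>y. f (x, y))"
      using Q_int by (auto simp: f_def)
  qed
  then show "integrable (P \<Otimes>\<^sub>M Q) (\<lambda>p. fst p \<bullet> snd p)" by (simp add: f_def)
  show "(\<integral>p. fst p \<bullet> snd p \<partial>(P \<Otimes>\<^sub>M Q)) = (\<integral>x. x \<partial>P) \<bullet> (\<integral>y. y \<partial>Q)"
    using integral_fst'[OF \<open>integrable (P \<Otimes>\<^sub>M Q) f\<close>] P_int Q_int by (simp add: f_def)
qed

lemma (in prob_space) indep_var_integral_inner:
  fixes X Y :: "'a \<Rightarrow> 'u::{real_inner, banach, second_countable_topology}"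
  assumes ind: "indep_var borel X borel Y" and "integrable M X" "integrable M Y"
  shows "integrable M (\<lambda>\<omega>. X \<omega> \<bullet> Y \<omega>)"
    and "expectation (\<lambda>\<omega>. X \<omega> \<bullet> Y \<omega>) = expectation X \<bullet> expectation Y"
proof -
  have [measurable]: "X \<in> borel_measurable M" "Y \<in> borel_measurable M"
    using ind by (auto dest: indep_var_rv1 indep_var_rv2)
  define P where "P = distr M borel X"
  define Q where "Q = distr M borel Y"
  interpret P: prob_space P unfolding P_def by (rule prob_space_distr) measurable
  interpret Q: prob_space Q unfolding Q_def by (rule prob_space_distr) measurable
  interpret PQ: pair_prob_space P Q ..
  have "integrable P (\<lambda>x. x)" "integrable Q (\<lambda>y. y)"
    using assms(2,3) by (simp_all add: P_def Q_def integrable_distr_eq)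
  note inner_PQ = integral_inner_pair_measure[OF PQ.pair_sigma_finite_axioms _ _ this]
  have joint: "distr M (borel \<Otimes>\<^sub>M borel) (\<lambda>\<omega>. (X \<omega>, Y \<omega>)) = P \<Otimes>\<^sub>M Q"
    using ind unfolding indep_var_distribution_eq P_def Q_def by simp
  have pair_measurable: "(\<lambda>\<omega>. (X \<omega>, Y \<omega>)) \<in> measurable M (borel \<Otimes>\<^sub>M borel)" by measurable
  have inner_measurable: "(\<lambda>p::'u \<times> 'u. fst p \<bullet> snd p) \<in> borel_measurable (borel \<Otimes>\<^sub>M borel)"
    by measurable
  show "integrable M (\<lambda>\<omega>. X \<omega> \<bullet> Y \<omega>)"
    using inner_PQ(1) integrable_distr_eq[OF pair_measurable inner_measurable] by (simp add: joint P_def Q_def)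
  show "expectation (\<lambda>\<omega>. X \<omega> \<bullet> Y \<omega>) = expectation X \<bullet> expectation Y"
    using inner_PQ(2) integral_distr[OF pair_measurable inner_measurable] by (simp add: joint P_def Q_def integral_distr)
qed

lemma (in prob_space) integral_norm_sum_indep_centered:
  fixes Y :: "'i \<Rightarrow> 'a \<Rightarrow> 'u::{real_inner, banach, second_countable_topology}"
  assumes "finite I" and ind: "indep_vars (\<lambda>_. borel) Y I"
    and integrable: "\<And>i. i \<in> I \<Longrightarrow> integrable M (Y i)"
    and centered: "\<And>i. i \<in> I \<Longrightarrow> expectation (Y i) = 0"
    and square_integrable: "\<And>i. i \<in> I \<Longrightarrow> integrable M (\<lambda>\<omega>. (norm (Y i \<omega>))\<^sup>2)"
  shows "integrable M (\<lambda>\<omega>. (norm (\<Sum>i\<in>I. Y i \<omega>))\<^sup>2)"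
    and "expectation (\<lambda>\<omega>. (norm (\<Sum>i\<in>I. Y i \<omega>))\<^sup>2) = (\<Sum>i\<in>I. expectation (\<lambda>\<omega>. (norm (Y i \<omega>))\<^sup>2))"
proof -
  have expand: "(norm (\<Sum>i\<in>I. Y i \<omega>))\<^sup>2 = (\<Sum>i\<in>I. \<Sum>j\<in>I. Y i \<omega> \<bullet> Y j \<omega>)" for \<omega>
    by (simp add: power2_norm_eq_inner inner_sum_left inner_sum_right) (rule sum.swap)
  have cross: "integrable M (\<lambda>\<omega>. Y i \<omega> \<bullet> Y j \<omega>) \<and>
      expectation (\<lambda>\<omega>. Y i \<omega> \<bullet> Y j \<omega>) = (if i = j then expectation (\<lambda>\<omega>. (norm (Y i \<omega>))\<^sup>2) else 0)"
    if "i \<in> I" "j \<in> I" for i j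
  proof (cases "i = j")
    case True
    then show ?thesis using square_integrable[OF that(1)] by (simp add: power2_norm_eq_inner)
  next
    case False
    then have "indep_var borel (Y i) borel (Y j)"
      using indep_vars_imp_indep_var[OF ind that] by simp
    then show ?thesis
      using indep_var_integral_inner[of "Y i" "Y j"] integrable that centered False by simp
  qed
  then show "integrable M (\<lambda>\<omega>. (norm (\<Sum>i\<in>I. Y i \<omega>))\<^sup>2)"
    unfolding expand by (intro Bochner_Integration.integrable_sum) auto
  have "expectation (\<lambda>\<omega>. (norm (\<Sum>i\<in>I. Y i \<omega>))\<^sup>2)
      = (\<Sum>i\<in>I. \<Sum>j\<in>I. expectation (\<lambda>\<omega>. Y i \<omega> \<bullet> Y j \<omega>))"
    unfolding expand using cross
    by (simp add: Bochner_Integration.integral_sum Bochner_Integration.integrable_sum)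
  also have "\<dots> = (\<Sum>i\<in>I. \<Sum>j\<in>I. if i = j then expectation (\<lambda>\<omega>. (norm (Y i \<omega>))\<^sup>2) else 0)"
    using cross by (intro sum.cong refl) blast
  also have "\<dots> = (\<Sum>i\<in>I. expectation (\<lambda>\<omega>. (norm (Y i \<omega>))\<^sup>2))"
    using \<open>finite I\<close> by simp
  finally show "expectation (\<lambda>\<omega>. (norm (\<Sum>i\<in>I. Y i \<omega>))\<^sup>2) = (\<Sum>i\<in>I. expectation (\<lambda>\<omega>. (norm (Y i \<omega>))\<^sup>2))" .
qed

section \<open>Covering numbers\<close>

lemma finite_cball_net:
  fixes S :: "'a::metric_space set"
  assumes "compact (closure S)" "\<nu> > 0"
  shows "\<exists>F. finite F \<and> F \<subseteq> S \<and> S \<subseteq> (\<Union>x\<in>F. cball x \<nu>)"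
proof -
  have "Met_TC.mtotally_bounded S"
    using assms(1) by (intro Met_TC.compact_closure_of_imp_mtotally_bounded) auto
  then obtain F where "finite F" "F \<subseteq> S" "S \<subseteq> (\<Union>x\<in>F. ball x \<nu>)"
    using assms(2) unfolding Met_TC.mtotally_bounded_def by auto
  then show ?thesis by (meson ball_subset_cball order_trans UN_mono order_refl)
qed

lemma covering_number_attained:
  fixes S :: "'a::metric_space set"
  assumes "compact (closure S)" "\<nu> > 0"
  shows "\<exists>F. finite F \<and> F \<subseteq> S \<and> card F = covering_number \<nu> S \<and> S \<subseteq> (\<Union>x\<in>F. cball x \<nu>)"
proof -
  have "\<exists>n F. finite F \<and> F \<subseteq> S \<and> card F = n \<and> S \<subseteq> (\<Union>x\<in>F. cball x \<nu>)"
    using finite_cball_net[OF assms] by blast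
  then show ?thesis unfolding covering_number_def by (rule LeastI_ex)
qed

lemma covering_number_net_in_domain:
  fixes B :: "'u \<Rightarrow> 'w::metric_space"
  assumes "compact (closure (B ` D))" "\<nu> > 0"
  obtains F where "finite F" "F \<subseteq> D" "card F \<le> covering_number \<nu> (B ` D)"
    "\<And>u. u \<in> D \<Longrightarrow> \<exists>k\<in>F. dist (B u) (B k) \<le> \<nu>"
proof -
  obtain G where G: "finite G" "G \<subseteq> B ` D" "card G = covering_number \<nu> (B ` D)"
    "B ` D \<subseteq> (\<Union>y\<in>G. cball y \<nu>)"
    using covering_number_attained[OF assms] by blast
  define F where "F = inv_into D B ` G"
  have B_F: "B (inv_into D B y) = y" if "y \<in> G" for y
    using G(2) that by (simp add: f_inv_into_f subset_iff)
  show ?thesis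
  proof
    show "finite F" "F \<subseteq> D" using G(1,2) by (auto simp: F_def inv_into_into)
    show "card F \<le> covering_number \<nu> (B ` D)" unfolding F_def G(3)[symmetric] by (rule card_image_le[OF G(1)])
    fix u assume "u \<in> D"
    then obtain y where "y \<in> G" "dist y (B u) \<le> \<nu>" using G(4) by auto
    then show "\<exists>k\<in>F. dist (B u) (B k) \<le> \<nu>"
      unfolding F_def by (metis B_F dist_commute imageI)
  qed
qed

lemma compact_closure_image_bounded:
  assumes B: "bounded_linear B" and compact_ball_image: "compact (closure (B ` cball 0 1))"
    and "bounded D"
  shows "compact (closure (B ` D))"
proof -
  obtain R where R: "R > 0" "\<And>u. u \<in> D \<Longrightarrow> norm u \<le> R"
    using \<open>bounded D\<close> unfolding bounded_pos by blast
  define C where "C = (\<lambda>y. R *\<^sub>R y) ` closure (B ` cball 0 1)"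
  have "compact C" unfolding C_def using compact_ball_image by (rule compact_scaling)
  have "B ` D \<subseteq> C"
  proof
    fix y assume "y \<in> B ` D"
    then obtain u where u: "u \<in> D" "y = B u" by auto
    have "(1/R) *\<^sub>R u \<in> cball 0 1" using R u by (simp add: field_simps)
    then have "B ((1/R) *\<^sub>R u) \<in> closure (B ` cball 0 1)" by (meson closure_subset image_eqI subsetD)
    moreover have "y = R *\<^sub>R B ((1/R) *\<^sub>R u)"
      using R u by (simp add: linear_cmul[OF bounded_linear.linear[OF B]])
    ultimately show "y \<in> C" unfolding C_def by blast
  qed
  then have "closure (B ` D) \<subseteq> C"
    using \<open>compact C\<close> by (intro closure_minimal compact_imp_closed)
  then show ?thesis
    using \<open>compact C\<close> by (metis closed_Int_compact closed_closure inf.absorb_iff1)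
qed

section \<open>The linearized gap functional\<close>

definition linearized_gap :: "'u::real_inner set \<Rightarrow> ('u \<Rightarrow> real) \<Rightarrow> 'u \<Rightarrow> 'u \<Rightarrow> real" where
  "linearized_gap D \<phi> g u = (SUP v\<in>D. g \<bullet> (u - v) + \<phi> u - \<phi> v)"

lemma gap_fun_eq_linearized_gap:
  assumes "\<And>h. G (B u) (B h) = g \<bullet> h"
  shows "gap_fun \<psi> B G u = linearized_gap (dom_psi \<psi>) (\<lambda>v. enn2real (\<psi> v)) g u"
  unfolding gap_fun_def linearized_gap_def assms ..

lemma inner_diff_le_diameter:
  fixes k :: "'u::real_inner"
  assumes "bounded D" "u \<in> D" "v \<in> D"
  shows "k \<bullet> (u - v) \<le> norm k * diameter D"
proof -
  have "k \<bullet> (u - v) \<le> norm k * norm (u - v)" by (rule norm_cauchy_schwarz)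
  also have "\<dots> \<le> norm k * diameter D"
    using diameter_bounded_bound[OF assms] by (intro mult_left_mono) (auto simp: dist_norm)
  finally show ?thesis .
qed

lemma linearized_gap_upper:
  assumes "bounded D" "u \<in> D" "v \<in> D" and \<phi>_nonneg: "\<And>v. v \<in> D \<Longrightarrow> \<phi> v \<ge> 0"
  shows "g \<bullet> (u - v) + \<phi> u - \<phi> v \<le> linearized_gap D \<phi> g u"
proof -
  have "g \<bullet> (u - v) + \<phi> u - \<phi> v \<le> norm g * diameter D + \<phi> u" if "v \<in> D" for v
    using inner_diff_le_diameter[OF assms(1,2) that, of g] \<phi>_nonneg[OF that] by linarith
  then have "bdd_above ((\<lambda>v. g \<bullet> (u - v) + \<phi> u - \<phi> v) ` D)"
    by (rule bdd_aboveI2)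
  then show ?thesis
    unfolding linearized_gap_def using assms(3) by (rule cSUP_upper2) simp
qed

lemma linearized_gap_nonneg:
  assumes "bounded D" "u \<in> D" "\<And>v. v \<in> D \<Longrightarrow> \<phi> v \<ge> 0"
  shows "0 \<le> linearized_gap D \<phi> g u"
  using linearized_gap_upper[OF assms(1,2,2,3)] by simp

lemma linearized_gap_le:
  fixes g h :: "'u::real_inner"
  assumes "D \<noteq> {}" "bounded D" "u \<in> D" "\<And>v. v \<in> D \<Longrightarrow> \<phi> v \<ge> 0"
  shows "linearized_gap D \<phi> g u \<le> linearized_gap D \<phi> h u + diameter D * norm (g - h)"
  unfolding linearized_gap_def[of D \<phi> g]
proof (rule cSUP_least[OF \<open>D \<noteq> {}\<close>])
  fix v assume "v \<in> D"
  have "g \<bullet> (u - v) \<le> h \<bullet> (u - v) + diameter D * norm (g - h)"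
    using inner_diff_le_diameter[OF assms(2,3) \<open>v \<in> D\<close>, of "g - h"]
    by (simp add: inner_diff_left mult.commute)
  with linearized_gap_upper[of D u v \<phi> h, OF assms(2,3) \<open>v \<in> D\<close> assms(4)]
  show "g \<bullet> (u - v) + \<phi> u - \<phi> v \<le> linearized_gap D \<phi> h u + diameter D * norm (g - h)"
    by linarith
qed

section \<open>Sampled gradients\<close>

text \<open>gr \<xi> u is the gradient at u of v \<mapsto> f (B v) \<xi>, and L \<xi> its Lipschitz constant with respect
  to the seminorm v \<mapsto> norm (B v).\<close>

locale sampled_gradient = prob_space M
  for M :: "'a measure" +
  fixes B :: "'u::{real_inner, banach, second_countable_topology} \<Rightarrow> 'w::real_normed_vector"
    and D :: "'u set"
    and xi :: "'a \<Rightarrow> 'x::topological_space"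
    and xs :: "nat \<Rightarrow> 'a \<Rightarrow> 'x"
    and gr :: "'x \<Rightarrow> 'u \<Rightarrow> 'u"
    and L :: "'x \<Rightarrow> real"
    and \<tau> :: real
  assumes D_nonempty: "D \<noteq> {}" and D_bounded: "bounded D"
    and compact_image: "compact (closure (B ` D))"
    and xi_measurable: "xi \<in> measurable M borel"
    and xs_measurable: "\<And>i. i \<ge> 1 \<Longrightarrow> xs i \<in> measurable M borel"
    and xs_indep: "indep_vars (\<lambda>_. borel) xs {1..}"
    and xs_distr: "\<And>i. i \<ge> 1 \<Longrightarrow> distr M borel (xs i) = distr M borel xi"
    and gr_measurable: "\<And>u. u \<in> D \<Longrightarrow> (\<lambda>\<xi>. gr \<xi> u) \<in> borel_measurable borel"
    and gr_integrable: "\<And>u. u \<in> D \<Longrightarrow> integrable M (\<lambda>\<omega>. gr (xi \<omega>) u)"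
    and L_nonneg: "\<And>\<xi>. L \<xi> \<ge> 0"
    and L_measurable: "L \<in> borel_measurable borel"
    and L_integrable: "integrable M (\<lambda>\<omega>. L (xi \<omega>))"
    and gr_lipschitz: "\<And>u v \<xi>. u \<in> D \<Longrightarrow> v \<in> D \<Longrightarrow> norm (gr \<xi> v - gr \<xi> u) \<le> L \<xi> * norm (B v - B u)"
    and \<tau>_pos: "\<tau> > 0"
    and subgaussian: "\<And>u. u \<in> D \<Longrightarrow>
      (\<integral>\<^sup>+\<omega>. ennreal (exp ((norm (gr (xi \<omega>) u - expectation (\<lambda>\<omega>'. gr (xi \<omega>') u)))\<^sup>2 / \<tau>\<^sup>2)) \<partial>M)
        \<le> ennreal (exp 1)"
begin

definition mean_gradient :: "'u \<Rightarrow> 'u" where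
  "mean_gradient u = expectation (\<lambda>\<omega>. gr (xi \<omega>) u)"

definition sample_gradient :: "nat \<Rightarrow> 'a \<Rightarrow> 'u \<Rightarrow> 'u" where
  "sample_gradient N \<omega> u = (1 / real N) *\<^sub>R (\<Sum>i=1..N. gr (xs i \<omega>) u)"

definition sample_lipschitz :: "nat \<Rightarrow> 'a \<Rightarrow> real" where
  "sample_lipschitz N \<omega> = (1 / real N) * (\<Sum>i=1..N. L (xs i \<omega>))"

lemma
  fixes h :: "'x \<Rightarrow> 'b::{banach, second_countable_topology}"
  assumes "i \<ge> 1" "h \<in> borel_measurable borel"
  shows integrable_xs_iff: "integrable M (\<lambda>\<omega>. h (xs i \<omega>)) \<longleftrightarrow> integrable M (\<lambda>\<omega>. h (xi \<omega>))"
    and integral_xs_eq: "(\<integral>\<omega>. h (xs i \<omega>) \<partial>M) = (\<integral>\<omega>. h (xi \<omega>) \<partial>M)"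
  using integrable_comp_distr_eq[OF xs_measurable xi_measurable xs_distr assms(2)]
    integral_comp_distr_eq[OF xs_measurable xi_measurable xs_distr assms(2)] assms(1) by auto

lemma mean_gradient_dist:
  assumes "u \<in> D" "v \<in> D"
  shows "norm (mean_gradient v - mean_gradient u) \<le> expectation (\<lambda>\<omega>. L (xi \<omega>)) * norm (B v - B u)"
proof -
  have "norm (mean_gradient v - mean_gradient u) = norm (expectation (\<lambda>\<omega>. gr (xi \<omega>) v - gr (xi \<omega>) u))"
    unfolding mean_gradient_def using gr_integrable assms by simp
  also have "\<dots> \<le> expectation (\<lambda>\<omega>. norm (gr (xi \<omega>) v - gr (xi \<omega>) u))"
    by (rule integral_norm_bound)
  also have "\<dots> \<le> expectation (\<lambda>\<omega>. L (xi \<omega>) * norm (B v - B u))"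
    using gr_integrable assms L_integrable gr_lipschitz by (intro integral_mono) auto
  also have "\<dots> = expectation (\<lambda>\<omega>. L (xi \<omega>)) * norm (B v - B u)" by simp
  finally show ?thesis .
qed

lemma sample_gradient_dist:
  assumes "u \<in> D" "v \<in> D"
  shows "norm (sample_gradient N \<omega> v - sample_gradient N \<omega> u) \<le> sample_lipschitz N \<omega> * norm (B v - B u)"
proof -
  have "norm (sample_gradient N \<omega> v - sample_gradient N \<omega> u)
      = (1 / real N) * norm (\<Sum>i=1..N. gr (xs i \<omega>) v - gr (xs i \<omega>) u)"
    unfolding sample_gradient_def by (simp add: sum_subtractf flip: scaleR_diff_right)
  also have "\<dots> \<le> (1 / real N) * (\<Sum>i=1..N. L (xs i \<omega>) * norm (B v - B u))"
    using assms gr_lipschitz by (intro mult_left_mono order_trans[OF norm_sum] sum_mono) auto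
  also have "\<dots> = sample_lipschitz N \<omega> * norm (B v - B u)"
    unfolding sample_lipschitz_def by (simp add: sum_distrib_right)
  finally show ?thesis .
qed

lemma sample_lipschitz_integrable:
  assumes "N \<ge> 1"
  shows "integrable M (sample_lipschitz N)"
    and "expectation (sample_lipschitz N) = expectation (\<lambda>\<omega>. L (xi \<omega>))"
proof -
  have L_xs: "integrable M (\<lambda>\<omega>. L (xs i \<omega>))" "expectation (\<lambda>\<omega>. L (xs i \<omega>)) = expectation (\<lambda>\<omega>. L (xi \<omega>))"
    if "i \<in> {1..N}" for i
    using that integrable_xs_iff[OF _ L_measurable] integral_xs_eq[OF _ L_measurable] L_integrable by auto
  then show "integrable M (sample_lipschitz N)"
    unfolding sample_lipschitz_def by (intro integrable_mult_right Bochner_Integration.integrable_sum)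
  show "expectation (sample_lipschitz N) = expectation (\<lambda>\<omega>. L (xi \<omega>))"
    unfolding sample_lipschitz_def using L_xs assms by (simp add: Bochner_Integration.integral_sum)
qed

lemma gradient_second_moment:
  assumes "u \<in> D"
  shows "integrable M (\<lambda>\<omega>. (norm (mean_gradient u - gr (xi \<omega>) u))\<^sup>2)"
    and "expectation (\<lambda>\<omega>. (norm (mean_gradient u - gr (xi \<omega>) u))\<^sup>2) \<le> \<tau>\<^sup>2 * exp 1"
proof -
  have "(\<lambda>\<omega>. gr (xi \<omega>) u - expectation (\<lambda>\<omega>'. gr (xi \<omega>') u)) \<in> borel_measurable M"
    using measurable_compose[OF xi_measurable gr_measurable[OF assms]] by (rule borel_measurable_diff) simp
  from second_moment_le_of_exp_square[OF this \<tau>_pos _ subgaussian[OF assms]]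
  show "integrable M (\<lambda>\<omega>. (norm (mean_gradient u - gr (xi \<omega>) u))\<^sup>2)"
    and "expectation (\<lambda>\<omega>. (norm (mean_gradient u - gr (xi \<omega>) u))\<^sup>2) \<le> \<tau>\<^sup>2 * exp 1"
    by (simp_all add: mean_gradient_def norm_minus_commute)
qed

lemma sample_gradient_deviation:
  assumes "N \<ge> 1" "u \<in> D"
  shows "integrable M (\<lambda>\<omega>. (norm (mean_gradient u - sample_gradient N \<omega> u))\<^sup>2)"
    and "expectation (\<lambda>\<omega>. (norm (mean_gradient u - sample_gradient N \<omega> u))\<^sup>2) \<le> exp 1 * \<tau>\<^sup>2 / real N"
proof -
  define \<phi> where "\<phi> \<xi> = mean_gradient u - gr \<xi> u" for \<xi>
  define Y where "Y i = (\<lambda>\<omega>. \<phi> (xs i \<omega>))" for i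
  have \<phi>_measurable [measurable]: "\<phi> \<in> borel_measurable borel"
    unfolding \<phi>_def using gr_measurable[OF assms(2)] by measurable
  have \<phi>_xi_integrable: "integrable M (\<lambda>\<omega>. \<phi> (xi \<omega>))"
    unfolding \<phi>_def using gr_integrable[OF assms(2)] by simp
  note \<phi>_second_moment = gradient_second_moment[OF assms(2), folded \<phi>_def]
  have Y: "integrable M (Y i)" "expectation (Y i) = 0"
      "integrable M (\<lambda>\<omega>. (norm (Y i \<omega>))\<^sup>2)" "expectation (\<lambda>\<omega>. (norm (Y i \<omega>))\<^sup>2) \<le> \<tau>\<^sup>2 * exp 1"
    if "i \<in> {1..N}" for i
  proof -
    have "i \<ge> 1" using that by simp
    note transfer = integrable_xs_iff[OF this] integral_xs_eq[OF this]
    show "integrable M (Y i)" using transfer(1)[of \<phi>] \<phi>_xi_integrable by (simp add: Y_def)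
    have "expectation (\<lambda>\<omega>. \<phi> (xi \<omega>)) = 0"
      unfolding \<phi>_def mean_gradient_def using gr_integrable[OF assms(2)] by (simp add: prob_space)
    then show "expectation (Y i) = 0" using transfer(2)[of \<phi>] by (simp add: Y_def)
    show "integrable M (\<lambda>\<omega>. (norm (Y i \<omega>))\<^sup>2)"
      using transfer(1)[of "\<lambda>\<xi>. (norm (\<phi> \<xi>))\<^sup>2"] \<phi>_second_moment(1) by (simp add: Y_def)
    show "expectation (\<lambda>\<omega>. (norm (Y i \<omega>))\<^sup>2) \<le> \<tau>\<^sup>2 * exp 1"
      using transfer(2)[of "\<lambda>\<xi>. (norm (\<phi> \<xi>))\<^sup>2"] \<phi>_second_moment(2) by (simp add: Y_def)
  qed
  have indep: "indep_vars (\<lambda>_. borel) Y {1..N}"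
    unfolding Y_def
    by (rule indep_vars_compose2[OF indep_vars_subset[OF xs_indep]]) auto
  have sum_Y: "mean_gradient u - sample_gradient N \<omega> u = (1 / real N) *\<^sub>R (\<Sum>i=1..N. Y i \<omega>)" for \<omega>
    using assms(1) by (simp add: Y_def \<phi>_def sample_gradient_def sum_subtractf scaleR_diff_right sum_constant_scaleR)
  note Bienayme = integral_norm_sum_indep_centered[OF finite_atLeastAtMost indep Y(1-3)]
  show "integrable M (\<lambda>\<omega>. (norm (mean_gradient u - sample_gradient N \<omega> u))\<^sup>2)"
    unfolding sum_Y using Bienayme(1) by (simp add: power_divide)
  have "expectation (\<lambda>\<omega>. (norm (mean_gradient u - sample_gradient N \<omega> u))\<^sup>2)
      = (1 / real N)\<^sup>2 * (\<Sum>i=1..N. expectation (\<lambda>\<omega>. (norm (Y i \<omega>))\<^sup>2))"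
    unfolding sum_Y using Bienayme(2) by (simp add: power_divide)
  also have "\<dots> \<le> (1 / real N)\<^sup>2 * (real N * (\<tau>\<^sup>2 * exp 1))"
    using Y(4) sum_bounded_above[of "{1..N}" _ "\<tau>\<^sup>2 * exp 1"] by (intro mult_left_mono) auto
  also have "\<dots> = exp 1 * \<tau>\<^sup>2 / real N"
    using assms(1) by (simp add: power2_eq_square field_simps)
  finally show "expectation (\<lambda>\<omega>. (norm (mean_gradient u - sample_gradient N \<omega> u))\<^sup>2) \<le> exp 1 * \<tau>\<^sup>2 / real N" .
qed

lemma expectation_L_nonneg: "0 \<le> expectation (\<lambda>\<omega>. L (xi \<omega>))"
  using L_nonneg by (simp add: integral_nonneg_AE)

lemma sample_lipschitz_nonneg: "0 \<le> sample_lipschitz N \<omega>"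
  using L_nonneg by (simp add: sample_lipschitz_def sum_nonneg)

definition gradient_error_bound :: "real \<Rightarrow> 'u set \<Rightarrow> nat \<Rightarrow> 'a \<Rightarrow> real" where
  "gradient_error_bound \<nu> F N \<omega> =
     \<nu> * (expectation (\<lambda>\<omega>. L (xi \<omega>)) + sample_lipschitz N \<omega>)
     + sqrt (\<Sum>k\<in>F. (norm (mean_gradient k - sample_gradient N \<omega> k))\<^sup>2)"

lemma gradient_error_bound_nonneg:
  assumes "\<nu> \<ge> 0"
  shows "0 \<le> gradient_error_bound \<nu> F N \<omega>"
  unfolding gradient_error_bound_def using assms expectation_L_nonneg sample_lipschitz_nonneg[of N \<omega>]
  by (intro add_nonneg_nonneg mult_nonneg_nonneg real_sqrt_ge_zero sum_nonneg) auto

lemma gradient_error_le_bound: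
  assumes "finite F" "F \<subseteq> D" and net: "\<And>u. u \<in> D \<Longrightarrow> \<exists>k\<in>F. dist (B u) (B k) \<le> \<nu>"
    and "u \<in> D"
  shows "norm (mean_gradient u - sample_gradient N \<omega> u) \<le> gradient_error_bound \<nu> F N \<omega>"
proof -
  obtain k where k: "k \<in> F" "norm (B u - B k) \<le> \<nu>"
    using net[OF \<open>u \<in> D\<close>] by (auto simp: dist_norm)
  have "k \<in> D" using k(1) \<open>F \<subseteq> D\<close> by auto
  have "norm (mean_gradient u - mean_gradient k) \<le> expectation (\<lambda>\<omega>. L (xi \<omega>)) * norm (B u - B k)"
    by (rule mean_gradient_dist[OF \<open>k \<in> D\<close> \<open>u \<in> D\<close>])
  also have "\<dots> \<le> expectation (\<lambda>\<omega>. L (xi \<omega>)) * \<nu>"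
    by (intro mult_left_mono k(2) expectation_L_nonneg)
  finally have mean_close: "norm (mean_gradient u - mean_gradient k) \<le> expectation (\<lambda>\<omega>. L (xi \<omega>)) * \<nu>" .
  have "norm (sample_gradient N \<omega> k - sample_gradient N \<omega> u) \<le> sample_lipschitz N \<omega> * norm (B u - B k)"
    using sample_gradient_dist[OF \<open>u \<in> D\<close> \<open>k \<in> D\<close>] by (simp add: norm_minus_commute)
  also have "\<dots> \<le> sample_lipschitz N \<omega> * \<nu>"
    by (intro mult_left_mono k(2) sample_lipschitz_nonneg)
  finally have sample_close: "norm (sample_gradient N \<omega> k - sample_gradient N \<omega> u) \<le> sample_lipschitz N \<omega> * \<nu>" .
  have at_net_point: "norm (mean_gradient k - sample_gradient N \<omega> k)
      \<le> sqrt (\<Sum>k\<in>F. (norm (mean_gradient k - sample_gradient N \<omega> k))\<^sup>2)"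
    using k(1) \<open>finite F\<close> by (intro real_le_rsqrt member_le_sum) auto
  have "mean_gradient u - sample_gradient N \<omega> u = (mean_gradient u - mean_gradient k)
      + (mean_gradient k - sample_gradient N \<omega> k) + (sample_gradient N \<omega> k - sample_gradient N \<omega> u)"
    by simp
  then have "norm (mean_gradient u - sample_gradient N \<omega> u)
      \<le> norm (mean_gradient u - mean_gradient k) + norm (mean_gradient k - sample_gradient N \<omega> k)
        + norm (sample_gradient N \<omega> k - sample_gradient N \<omega> u)"
    by (metis norm_triangle_ineq norm_triangle_le add_right_mono)
  with mean_close sample_close at_net_point show ?thesis
    unfolding gradient_error_bound_def by (simp add: algebra_simps)
qed

lemma gradient_error_bound_expectation:
  assumes "N \<ge> 1" "finite F" "F \<subseteq> D"
  shows "integrable M (gradient_error_bound \<nu> F N)"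
    and "expectation (gradient_error_bound \<nu> F N)
      \<le> 2 * \<nu> * expectation (\<lambda>\<omega>. L (xi \<omega>)) + sqrt 3 * \<tau> / sqrt (real N) * sqrt (real (card F))"
proof -
  define S where "S \<omega> = (\<Sum>k\<in>F. (norm (mean_gradient k - sample_gradient N \<omega> k))\<^sup>2)" for \<omega>
  note deviation = sample_gradient_deviation[OF \<open>N \<ge> 1\<close>]
  have S_integrable: "integrable M S"
    unfolding S_def using deviation(1) \<open>F \<subseteq> D\<close> by (intro Bochner_Integration.integrable_sum) auto
  have "expectation S = (\<Sum>k\<in>F. expectation (\<lambda>\<omega>. (norm (mean_gradient k - sample_gradient N \<omega> k))\<^sup>2))"
    unfolding S_def using deviation(1) \<open>F \<subseteq> D\<close> by (intro Bochner_Integration.integral_sum) auto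
  also have "\<dots> \<le> (\<Sum>k\<in>F. exp 1 * \<tau>\<^sup>2 / real N)"
    using deviation(2) \<open>F \<subseteq> D\<close> by (intro sum_mono) auto
  also have "\<dots> = real (card F) * (exp 1 * \<tau>\<^sup>2 / real N)"
    by simp
  also have "\<dots> \<le> real (card F) * (3 * \<tau>\<^sup>2 / real N)"
    using exp_le by (intro mult_left_mono divide_right_mono mult_right_mono) auto
  finally have "sqrt (expectation S) \<le> sqrt (real (card F) * (3 * \<tau>\<^sup>2 / real N))"
    by (rule real_sqrt_le_mono)
  also have "\<dots> = sqrt 3 * \<tau> / sqrt (real N) * sqrt (real (card F))"
    using \<tau>_pos by (simp add: real_sqrt_mult real_sqrt_divide)
  finally have sqrt_expectation_S: "sqrt (expectation S) \<le> sqrt 3 * \<tau> / sqrt (real N) * sqrt (real (card F))" .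
  have "S \<omega> \<ge> 0" for \<omega> unfolding S_def by (simp add: sum_nonneg)
  note sqrt_S = integral_sqrt_le_sqrt_integral[OF S_integrable this]
  note L_bar = sample_lipschitz_integrable[OF \<open>N \<ge> 1\<close>]
  have bound_eq: "gradient_error_bound \<nu> F N
      = (\<lambda>\<omega>. \<nu> * expectation (\<lambda>\<omega>. L (xi \<omega>)) + \<nu> * sample_lipschitz N \<omega> + sqrt (S \<omega>))"
    by (simp add: fun_eq_iff gradient_error_bound_def S_def algebra_simps)
  show "integrable M (gradient_error_bound \<nu> F N)"
    unfolding bound_eq using sqrt_S(1) L_bar(1) by simp
  have "expectation (gradient_error_bound \<nu> F N)
      = 2 * \<nu> * expectation (\<lambda>\<omega>. L (xi \<omega>)) + expectation (\<lambda>\<omega>. sqrt (S \<omega>))"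
    unfolding bound_eq using sqrt_S(1) L_bar by (simp add: prob_space)
  with sqrt_S(2) sqrt_expectation_S
  show "expectation (gradient_error_bound \<nu> F N)
      \<le> 2 * \<nu> * expectation (\<lambda>\<omega>. L (xi \<omega>)) + sqrt 3 * \<tau> / sqrt (real N) * sqrt (real (card F))"
    by linarith
qed

lemma uniform_gradient_error:
  assumes "N \<ge> 1" "\<nu> > 0"
  obtains Err where "integrable M Err" "\<And>\<omega>. 0 \<le> Err \<omega>"
    "\<And>\<omega> u. u \<in> D \<Longrightarrow> norm (mean_gradient u - sample_gradient N \<omega> u) \<le> Err \<omega>"
    "expectation Err \<le> 2 * \<nu> * expectation (\<lambda>\<omega>. L (xi \<omega>))
      + sqrt 3 * \<tau> / sqrt (real N) * sqrt (real (covering_number \<nu> (B ` D)))"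
proof -
  obtain F where F: "finite F" "F \<subseteq> D" "card F \<le> covering_number \<nu> (B ` D)"
    and net: "\<And>u. u \<in> D \<Longrightarrow> \<exists>k\<in>F. dist (B u) (B k) \<le> \<nu>"
    using covering_number_net_in_domain[OF compact_image \<open>\<nu> > 0\<close>] by blast
  note bound = gradient_error_bound_expectation[OF \<open>N \<ge> 1\<close> F(1,2), of \<nu>]
  have "sqrt (real (card F)) \<le> sqrt (real (covering_number \<nu> (B ` D)))"
    using F(3) by simp
  then have "sqrt 3 * \<tau> / sqrt (real N) * sqrt (real (card F))
      \<le> sqrt 3 * \<tau> / sqrt (real N) * sqrt (real (covering_number \<nu> (B ` D)))"
    using \<tau>_pos by (intro mult_left_mono) auto
  with bound(2) show ?thesis
    using that[OF bound(1) gradient_error_bound_nonneg gradient_error_le_bound[OF F(1,2) net]]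
      \<open>\<nu> > 0\<close> by fastforce
qed

theorem expected_linearized_gap_le:
  assumes "N \<ge> 1" "\<nu> > 0" and u: "\<And>\<omega>. \<omega> \<in> space M \<Longrightarrow> u \<omega> \<in> D"
    and \<phi>_nonneg: "\<And>v. v \<in> D \<Longrightarrow> \<phi> v \<ge> 0"
  shows "(\<integral>\<^sup>+\<omega>. ennreal (linearized_gap D \<phi> (mean_gradient (u \<omega>)) (u \<omega>)) \<partial>M)
    \<le> (\<integral>\<^sup>+\<omega>. ennreal (linearized_gap D \<phi> (sample_gradient N \<omega> (u \<omega>)) (u \<omega>)) \<partial>M)
      + ennreal (2 * expectation (\<lambda>\<omega>. L (xi \<omega>)) * diameter D * \<nu>
          + sqrt 3 * \<tau> * diameter D / sqrt (real N) * sqrt (real (covering_number \<nu> (B ` D))))"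
proof -
  obtain Err where Err: "integrable M Err" "\<And>\<omega>. 0 \<le> Err \<omega>"
    "\<And>\<omega> u. u \<in> D \<Longrightarrow> norm (mean_gradient u - sample_gradient N \<omega> u) \<le> Err \<omega>"
    "expectation Err \<le> 2 * \<nu> * expectation (\<lambda>\<omega>. L (xi \<omega>))
      + sqrt 3 * \<tau> / sqrt (real N) * sqrt (real (covering_number \<nu> (B ` D)))"
    using uniform_gradient_error[OF assms(1,2)] by blast
  have diameter_nonneg: "0 \<le> diameter D" by (rule diameter_ge_0[OF D_bounded])
  have pointwise: "ennreal (linearized_gap D \<phi> (mean_gradient (u \<omega>)) (u \<omega>))
      \<le> ennreal (linearized_gap D \<phi> (sample_gradient N \<omega> (u \<omega>)) (u \<omega>)) + ennreal (diameter D * Err \<omega>)"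
    if "\<omega> \<in> space M" for \<omega>
  proof -
    have "linearized_gap D \<phi> (mean_gradient (u \<omega>)) (u \<omega>)
        \<le> linearized_gap D \<phi> (sample_gradient N \<omega> (u \<omega>)) (u \<omega>)
          + diameter D * norm (mean_gradient (u \<omega>) - sample_gradient N \<omega> (u \<omega>))"
      using linearized_gap_le[OF D_nonempty D_bounded u[OF that] \<phi>_nonneg] .
    also have "\<dots> \<le> linearized_gap D \<phi> (sample_gradient N \<omega> (u \<omega>)) (u \<omega>) + diameter D * Err \<omega>"
      using Err(3)[OF u[OF that]] diameter_nonneg by (intro add_left_mono mult_left_mono)
    finally show ?thesis
      using linearized_gap_nonneg[OF D_bounded u[OF that] \<phi>_nonneg] Err(2)[of \<omega>] diameter_nonneg
      by (simp add: ennreal_leI flip: ennreal_plus)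
  qed
  have "Err \<in> borel_measurable M" using Err(1) by measurable
  then have "(\<integral>\<^sup>+\<omega>. ennreal (linearized_gap D \<phi> (mean_gradient (u \<omega>)) (u \<omega>)) \<partial>M)
    \<le> (\<integral>\<^sup>+\<omega>. ennreal (linearized_gap D \<phi> (sample_gradient N \<omega> (u \<omega>)) (u \<omega>)) \<partial>M)
      + (\<integral>\<^sup>+\<omega>. ennreal (diameter D * Err \<omega>) \<partial>M)"
    by (intro nn_integral_le_add pointwise) measurable
  also have "(\<integral>\<^sup>+\<omega>. ennreal (diameter D * Err \<omega>) \<partial>M) = ennreal (diameter D * expectation Err)"
    using Err(1,2) diameter_nonneg by (subst nn_integral_eq_integral) auto
  also have "\<dots> \<le> ennreal (2 * expectation (\<lambda>\<omega>. L (xi \<omega>)) * diameter D * \<nu>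
      + sqrt 3 * \<tau> * diameter D / sqrt (real N) * sqrt (real (covering_number \<nu> (B ` D))))"
    using mult_left_mono[OF Err(4) diameter_nonneg] by (intro ennreal_leI) (simp add: algebra_simps)
  finally show ?thesis by (simp add: add_left_mono)
qed

end

theorem theorem3p8:
  fixes M :: "'a measure"
    and B :: "'u::{real_inner, banach, second_countable_topology} \<Rightarrow> 'w::{banach, second_countable_topology}"
    and \<psi> :: "'u \<Rightarrow> ennreal"
    and U0 :: "'u set"
    and xi :: "'a \<Rightarrow> 'x::polish_space"
    and xs :: "nat \<Rightarrow> 'a \<Rightarrow> 'x"
    and f :: "'w \<Rightarrow> 'x \<Rightarrow> real"
    and \<zeta>f \<zeta>Df LDf :: "'x \<Rightarrow> real"
    and gr :: "'x \<Rightarrow> 'u \<Rightarrow> 'u"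
    and Dwf :: "'w \<Rightarrow> 'x \<Rightarrow> ('w \<Rightarrow>\<^sub>L real)"
    and \<tau> :: real
    and uN :: "nat \<Rightarrow> 'a \<Rightarrow> 'u"
  assumes prob: "prob_space M"
    and compl: "complete_measure M"
    and B_lin: "bounded_linear B"
    and B_compact: "compact (closure (B ` cball 0 1))"
    and psi_proper: "ennproper \<psi>"
    and psi_closed: "ennclosed \<psi>"
    and psi_convex: "ennconvex \<psi>"
    and dom_bounded: "bounded (dom_psi \<psi>)"
    and U0_open: "open U0" and U0_convex: "convex U0" and U0_bounded: "bounded U0"
    and dom_U0: "dom_psi \<psi> \<subseteq> U0"
    and xi_meas: "xi \<in> measurable M borel"
    and xs_meas: "\<And>i. i \<ge> 1 \<Longrightarrow> xs i \<in> measurable M borel"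
    and xs_indep: "prob_space.indep_vars M (\<lambda>_. borel) xs {1..}"
    and xs_distr: "\<And>i. i \<ge> 1 \<Longrightarrow> distr M borel (xs i) = distr M borel xi"
    and f_cont: "\<And>\<xi>. continuous_on (B ` dom_psi \<psi>) (\<lambda>w. f w \<xi>)"
    and f_meas: "\<And>w. w \<in> B ` U0 \<Longrightarrow> (\<lambda>\<xi>. f w \<xi>) \<in> borel_measurable borel"
    and f_bound: "\<And>u \<xi>. u \<in> U0 \<Longrightarrow> \<bar>f (B u) \<xi>\<bar> \<le> \<zeta>f \<xi>"
    and \<zeta>f_int: "\<zeta>f \<in> borel_measurable borel" "integrable M (\<lambda>\<omega>. \<zeta>f (xi \<omega>))"
    and g_deriv: "\<And>\<xi> u. u \<in> U0 \<Longrightarrow>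
                   ((\<lambda>v. f (B v) \<xi>) has_derivative (\<lambda>h. gr \<xi> u \<bullet> h)) (at u)"
    and g_C1: "\<And>\<xi>. continuous_on U0 (gr \<xi>)"
    and Dwf_cont: "\<And>\<xi>. continuous_on (B ` dom_psi \<psi>) (\<lambda>w. Dwf w \<xi>)"
    and Dwf_meas: "\<And>w. w \<in> B ` dom_psi \<psi> \<Longrightarrow> (\<lambda>\<xi>. Dwf w \<xi>) \<in> borel_measurable borel"
    and grad_adj: "\<And>u \<xi> h. u \<in> dom_psi \<psi> \<Longrightarrow> gr \<xi> u \<bullet> h = blinfun_apply (Dwf (B u) \<xi>) (B h)"
    and grad_bound: "\<And>u \<xi>. u \<in> U0 \<Longrightarrow> norm (gr \<xi> u) \<le> \<zeta>Df \<xi>"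
    and Dwf_bound: "\<And>u \<xi>. u \<in> dom_psi \<psi> \<Longrightarrow> norm (Dwf (B u) \<xi>) \<le> \<zeta>Df \<xi>"
    and \<zeta>Df_int: "\<zeta>Df \<in> borel_measurable borel" "integrable M (\<lambda>\<omega>. \<zeta>Df (xi \<omega>))"
    and LDf_nonneg: "\<And>\<xi>. LDf \<xi> \<ge> 0"
    and LDf_int: "LDf \<in> borel_measurable borel" "integrable M (\<lambda>\<omega>. LDf (xi \<omega>))"
    and grad_lip: "\<And>u1 u2 \<xi>. u1 \<in> dom_psi \<psi> \<Longrightarrow> u2 \<in> dom_psi \<psi> \<Longrightarrow>
                     norm (gr \<xi> u2 - gr \<xi> u1) \<le> LDf \<xi> * norm (B u2 - B u1)"
    and \<tau>_pos: "\<tau> > 0"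
    and subgauss: "\<And>u. u \<in> dom_psi \<psi> \<Longrightarrow>
          (\<integral>\<^sup>+\<omega>. ennreal (exp ((norm (gr (xi \<omega>) u - (\<integral>\<omega>'. gr (xi \<omega>') u \<partial>M)))\<^sup>2 / \<tau>\<^sup>2)) \<partial>M)
            \<le> ennreal (exp 1)"
    and uN_meas: "\<And>N. uN N \<in> borel_measurable M"
    and uN_dom: "\<And>N \<omega>. \<omega> \<in> space M \<Longrightarrow> uN N \<omega> \<in> dom_psi \<psi>"
  shows "\<forall>N::nat. \<forall>\<nu>::real. N \<ge> 1 \<and> \<nu> > 0 \<longrightarrow>
    (\<integral>\<^sup>+\<omega>. ennreal (gap_fun \<psi> B (\<lambda>w h. \<integral>\<omega>'. blinfun_apply (Dwf w (xi \<omega>')) h \<partial>M) (uN N \<omega>)) \<partial>M)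
    \<le> (\<integral>\<^sup>+\<omega>. ennreal (gap_fun \<psi> B
              (\<lambda>w h. (1 / real N) * (\<Sum>i=1..N. blinfun_apply (Dwf w (xs i \<omega>)) h)) (uN N \<omega>)) \<partial>M)
      + ennreal (2 * (\<integral>\<omega>. LDf (xi \<omega>) \<partial>M) * diameter (dom_psi \<psi>) * \<nu>
          + sqrt 3 * \<tau> * diameter (dom_psi \<psi>) / sqrt (real N)
            * sqrt (real (covering_number \<nu> (B ` dom_psi \<psi>))))"
proof -
  interpret prob_space M by (rule prob)
  have gr_measurable: "(\<lambda>\<xi>. gr \<xi> u) \<in> borel_measurable borel" if "u \<in> dom_psi \<psi>" for u
    by (rule borel_measurable_adjoint_representer[OF B_lin, where l = "Dwf (B u)"])
      (use grad_adj Dwf_meas that in auto)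
  have gr_integrable: "integrable M (\<lambda>\<omega>. gr (xi \<omega>) u)" if "u \<in> dom_psi \<psi>" for u
    using \<zeta>Df_int(2) measurable_compose[OF xi_meas gr_measurable[OF that]]
    by (rule Bochner_Integration.integrable_bound)
      (use that dom_U0 in \<open>auto intro!: AE_I2 order_trans[OF grad_bound]\<close>)
  txt \<open>Only the hypotheses on the gradients enter; in particular uN need not be measurable.\<close>
  have "dom_psi \<psi> \<noteq> {}" using psi_proper by (auto simp: ennproper_def dom_psi_def)
  then interpret sampled_gradient M B "dom_psi \<psi>" xi xs gr LDf \<tau>
    using compact_closure_image_bounded[OF B_lin B_compact dom_bounded] dom_bounded xi_meas xs_meas
      xs_indep xs_distr gr_measurable gr_integrable LDf_nonneg LDf_int grad_lip \<tau>_pos subgauss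
    by unfold_locales auto
  have expected_gap: "(\<integral>\<^sup>+\<omega>. ennreal (gap_fun \<psi> B (\<lambda>w h. \<integral>\<omega>'. Dwf w (xi \<omega>') h \<partial>M) (uN N \<omega>)) \<partial>M)
      = (\<integral>\<^sup>+\<omega>. ennreal (linearized_gap (dom_psi \<psi>) (\<lambda>v. enn2real (\<psi> v))
          (mean_gradient (uN N \<omega>)) (uN N \<omega>)) \<partial>M)" for N
    using uN_dom gr_integrable[OF uN_dom]
    by (intro nn_integral_cong arg_cong[where f = ennreal] gap_fun_eq_linearized_gap)
      (simp add: mean_gradient_def flip: grad_adj)
  have sample_gap: "(\<integral>\<^sup>+\<omega>. ennreal (gap_fun \<psi> B
          (\<lambda>w h. (1 / real N) * (\<Sum>i=1..N. Dwf w (xs i \<omega>) h)) (uN N \<omega>)) \<partial>M)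
      = (\<integral>\<^sup>+\<omega>. ennreal (linearized_gap (dom_psi \<psi>) (\<lambda>v. enn2real (\<psi> v))
          (sample_gradient N \<omega> (uN N \<omega>)) (uN N \<omega>)) \<partial>M)" for N
    using uN_dom
    by (intro nn_integral_cong arg_cong[where f = ennreal] gap_fun_eq_linearized_gap)
      (simp add: sample_gradient_def inner_sum_left flip: grad_adj)
  show ?thesis
    unfolding expected_gap sample_gap
    by (intro allI impI expected_linearized_gap_le) (auto simp: uN_dom)
qed

end
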